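(* Let $\{g_\xi\}_{\xi\in K}$ be a family of real-valued continuous functions on the unit circle $\mathbb{T}$, and for bounded non-negative measures $d\mu_0,d\mu_1$ on $\mathbb{T}$ define $\delta(d\mu_0,d\mu_1)=\sup_{\xi\in K}\left|\int_{\mathbb{T}}g_\xi\,(d\mu_0-d\mu_1)\right|$. Then $\delta$ is a weakly continuous metric on the set $\mathfrak{M}$ of bounded non-negative measures on $\mathbb{T}$ if and only if the following two conditions hold: (a) for any two distinct measures $d\mu_0\neq d\mu_1$ in $\mathfrak{M}$ there is $\xi\in K$ with $\int_{\mathbb{T}}g_\xi d\mu_0\neq\int_{\mathbb{T}}g_\xi d\mu_1$; and (b) the family $\{g_\xi\}_{\xi\in K}$ is equicontinuous and uniformly bounded.
   Context: Weak topology on $\mathfrak{M}$: $d\mu_k\to d\mu$ iff $\int fd\mu_k\to\int fd\mu$ for every real continuous $f$ on $\mathbb{T}$; a metric $\delta$ on $\mathfrak{M}$ is weakly continuous if it is continuous on $\mathfrak{M}\times\mathfrak{M}$ for this topology. The family is equicontinuous if for every $\epsilon>0$ there is $\gamma>0$ such that $|g_\xi(\theta_1)-g_\xi(\theta_2)|<\epsilon$ whenever $|\theta_1-\theta_2|<\gamma$, for all $\theta_1,\theta_2\in\mathbb{T}$ and all $\xi\in K$. *)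

theory Defs
  imports "HOL-Analysis.Analysis"
begin

abbreviation circle :: "complex set" where "circle \<equiv> sphere 0 1"

definition circle_measures :: "complex measure set" where
  "circle_measures = {\<mu>. sets \<mu> = sets (restrict_space borel circle) \<and> emeasure \<mu> (space \<mu>) < \<infinity>}"

definition weak_conv :: "(nat \<Rightarrow> complex measure) \<Rightarrow> complex measure \<Rightarrow> bool" where
  "weak_conv \<mu>s \<mu> \<longleftrightarrow> (\<forall>f :: complex \<Rightarrow> real. continuous_on circle f \<longrightarrow>
      (\<lambda>k. integral\<^sup>L (\<mu>s k) f) \<longlonglongrightarrow> integral\<^sup>L \<mu> f)"

text \<open>The function delta, with values in the extended reals (the supremum may be infinite).\<close>
definition delta :: "'k set \<Rightarrow> ('k \<Rightarrow> complex \<Rightarrow> real) \<Rightarrow> complex measure \<Rightarrow> complex measure \<Rightarrow> ereal" where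
  "delta K g \<mu>0 \<mu>1 = (SUP \<xi>\<in>K. ereal \<bar>integral\<^sup>L \<mu>0 (g \<xi>) - integral\<^sup>L \<mu>1 (g \<xi>)\<bar>)"

definition is_metric_on :: "'a set \<Rightarrow> ('a \<Rightarrow> 'a \<Rightarrow> ereal) \<Rightarrow> bool" where
  "is_metric_on A d \<longleftrightarrow>
     (\<forall>x\<in>A. \<forall>y\<in>A. d x y \<noteq> \<infinity> \<and> d x y \<noteq> -\<infinity> \<and> d x y \<ge> 0) \<and>
     (\<forall>x\<in>A. \<forall>y\<in>A. d x y = 0 \<longleftrightarrow> x = y) \<and>
     (\<forall>x\<in>A. \<forall>y\<in>A. d x y = d y x) \<and>
     (\<forall>x\<in>A. \<forall>y\<in>A. \<forall>z\<in>A. d x z \<le> d x y + d y z)"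

definition weakly_continuous :: "(complex measure \<Rightarrow> complex measure \<Rightarrow> ereal) \<Rightarrow> bool" where
  "weakly_continuous d \<longleftrightarrow>
     (\<forall>\<mu>s \<nu>s \<mu> \<nu>. (\<forall>k. \<mu>s k \<in> circle_measures) \<longrightarrow> (\<forall>k. \<nu>s k \<in> circle_measures) \<longrightarrow>
        \<mu> \<in> circle_measures \<longrightarrow> \<nu> \<in> circle_measures \<longrightarrow>
        weak_conv \<mu>s \<mu> \<longrightarrow> weak_conv \<nu>s \<nu> \<longrightarrow>
        (\<lambda>k. d (\<mu>s k) (\<nu>s k)) \<longlonglongrightarrow> d \<mu> \<nu>)"

definition equicontinuous_family :: "'k set \<Rightarrow> ('k \<Rightarrow> complex \<Rightarrow> real) \<Rightarrow> bool" where
  "equicontinuous_family K g \<longleftrightarrow>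
     (\<forall>\<epsilon>>0. \<exists>\<gamma>>0. \<forall>\<xi>\<in>K. \<forall>z1\<in>circle. \<forall>z2\<in>circle. dist z1 z2 < \<gamma> \<longrightarrow> \<bar>g \<xi> z1 - g \<xi> z2\<bar> < \<epsilon>)"

definition uniformly_bounded_family :: "'k set \<Rightarrow> ('k \<Rightarrow> complex \<Rightarrow> real) \<Rightarrow> bool" where
  "uniformly_bounded_family K g \<longleftrightarrow> (\<exists>C. \<forall>\<xi>\<in>K. \<forall>z\<in>circle. \<bar>g \<xi> z\<bar> \<le> C)"

end

theory Submission
  imports Defs "HOL-Probability.Giry_Monad" "HOL-Complex_Analysis.Great_Picard"
begin

(* For the Dirac masses (return circle_borel z) one has delta (return z) 0 = sup |g_xi z| and
   delta (return z) (return w) = sup |g_xi z - g_xi w|. If delta is a weakly continuous metric, these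
   are finite continuous functions on the compact sets T and T x T, so the first is bounded and the
   second is uniformly continuous and vanishes on the diagonal: this is (b), and (a) is definiteness.
   Conversely, by Arzela-Ascoli an equicontinuous uniformly bounded family is relatively compact in
   C(T), so a weakly convergent sequence of measures (whose masses are bounded) converges uniformly on
   the family, and the supremum defining delta passes to the limit. *)

abbreviation circle_borel :: "complex measure" where
  "circle_borel \<equiv> restrict_space borel circle"

definition separating_family :: "'k set \<Rightarrow> ('k \<Rightarrow> complex \<Rightarrow> real) \<Rightarrow> bool" where
  "separating_family K g \<longleftrightarrow> (\<forall>\<mu>0\<in>circle_measures. \<forall>\<mu>1\<in>circle_measures. \<mu>0 \<noteq> \<mu>1 \<longrightarrow>
     (\<exists>\<xi>\<in>K. integral\<^sup>L \<mu>0 (g \<xi>) \<noteq> integral\<^sup>L \<mu>1 (g \<xi>)))"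

lemma space_circle_measure: "\<mu> \<in> circle_measures \<Longrightarrow> space \<mu> = circle"
proof -
  assume "\<mu> \<in> circle_measures"
  then have "space \<mu> = space circle_borel"
    unfolding circle_measures_def by (intro sets_eq_imp_space_eq) simp
  then show ?thesis by (simp add: space_restrict_space)
qed

lemma finite_measure_circle_measure: "\<mu> \<in> circle_measures \<Longrightarrow> finite_measure \<mu>"
  unfolding circle_measures_def by (auto intro!: finite_measureI)

lemma borel_measurable_circle_measure:
  "\<mu> \<in> circle_measures \<Longrightarrow> continuous_on circle f \<Longrightarrow> f \<in> borel_measurable \<mu>"
  unfolding circle_measures_def
  using borel_measurable_continuous_on_restrict measurable_cong_sets by blast

lemma abs_integral_circle_measure_le:
  fixes f :: "complex \<Rightarrow> real"
  assumes "\<mu> \<in> circle_measures" "continuous_on circle f" "\<And>z. z \<in> circle \<Longrightarrow> \<bar>f z\<bar> \<le> B"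
  shows "integrable \<mu> f" "\<bar>integral\<^sup>L \<mu> f\<bar> \<le> B * measure \<mu> (space \<mu>)"
proof -
  interpret finite_measure \<mu> using finite_measure_circle_measure assms(1) .
  have meas: "f \<in> borel_measurable \<mu>" and sp: "space \<mu> = circle"
    using borel_measurable_circle_measure space_circle_measure assms by auto
  show "integrable \<mu> f"
    by (rule integrable_const_bound[of _ B]) (use assms(3) meas sp in auto)
  then have "\<bar>integral\<^sup>L \<mu> f\<bar> \<le> integral\<^sup>L \<mu> (\<lambda>_. B)"
    using integral_abs_bound integral_mono[of \<mu> "\<lambda>x. \<bar>f x\<bar>" "\<lambda>_. B"] assms(3) sp
    by (metis integrable_abs integrable_const order_trans)
  then show "\<bar>integral\<^sup>L \<mu> f\<bar> \<le> B * measure \<mu> (space \<mu>)" by (simp add: mult.commute)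
qed

lemma integrable_circle_measure:
  fixes f :: "complex \<Rightarrow> real"
  assumes "\<mu> \<in> circle_measures" "continuous_on circle f"
  shows "integrable \<mu> f"
proof -
  obtain B where "\<And>z. z \<in> circle \<Longrightarrow> norm (f z) \<le> B"
    using continuous_on_compact_bound[OF _ assms(2)] by auto
  then show ?thesis by (intro abs_integral_circle_measure_le(1)[OF assms]) simp
qed

lemma emeasure_space_return_circle:
  "z \<in> circle \<Longrightarrow> emeasure (return circle_borel z) (space (return circle_borel z)) = 1"
  by (intro prob_space.emeasure_space_1 prob_space_return) (simp add: space_restrict_space)

lemma return_in_circle_measures: "z \<in> circle \<Longrightarrow> return circle_borel z \<in> circle_measures"
  using emeasure_space_return_circle[of z] unfolding circle_measures_def by simp

lemma null_measure_in_circle_measures: "null_measure circle_borel \<in> circle_measures"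
  unfolding circle_measures_def by auto

lemma null_measure_neq_return: "z \<in> circle \<Longrightarrow> null_measure circle_borel \<noteq> return circle_borel z"
proof
  assume "z \<in> circle" and eq: "null_measure circle_borel = return circle_borel z"
  then show False using emeasure_space_return_circle[of z] eq[symmetric] by simp
qed

lemma integral_return_circle:
  fixes f :: "complex \<Rightarrow> real"
  shows "z \<in> circle \<Longrightarrow> continuous_on circle f \<Longrightarrow> integral\<^sup>L (return circle_borel z) f = f z"
  by (rule integral_return) (auto simp: space_restrict_space borel_measurable_continuous_on_restrict)

lemma weak_conv_return:
  assumes "\<And>n. u n \<in> circle" "u \<longlonglongrightarrow> a" "a \<in> circle"
  shows "weak_conv (\<lambda>n. return circle_borel (u n)) (return circle_borel a)"
  unfolding weak_conv_def
proof (intro allI impI)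
  fix f :: "complex \<Rightarrow> real" assume f: "continuous_on circle f"
  then have "(\<lambda>n. f (u n)) \<longlonglongrightarrow> f a"
    using assms unfolding continuous_on_sequentially comp_def by blast
  then show "(\<lambda>n. integral\<^sup>L (return circle_borel (u n)) f) \<longlonglongrightarrow> integral\<^sup>L (return circle_borel a) f"
    using integral_return_circle f assms by simp
qed

lemma weak_conv_const: "weak_conv (\<lambda>_. \<mu>) \<mu>"
  unfolding weak_conv_def by simp

lemma weak_conv_imp_measure_space:
  "weak_conv \<mu>s \<mu> \<Longrightarrow> (\<lambda>k. measure (\<mu>s k) (space (\<mu>s k))) \<longlonglongrightarrow> measure \<mu> (space \<mu>)"
  unfolding weak_conv_def by (drule spec[of _ "\<lambda>_. 1"]) simp

lemma weak_conv_integral_uniform_limit: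
  fixes F :: "nat \<Rightarrow> complex \<Rightarrow> real"
  assumes \<mu>s: "\<And>k. \<mu>s k \<in> circle_measures" and \<mu>: "\<mu> \<in> circle_measures" and wc: "weak_conv \<mu>s \<mu>"
    and F: "\<And>n. continuous_on circle (F n)" and lim: "uniform_limit circle F h sequentially"
    and m: "filterlim m at_top sequentially"
  shows "(\<lambda>n. integral\<^sup>L (\<mu>s (m n)) (F n) - integral\<^sup>L \<mu> (F n)) \<longlonglongrightarrow> 0"
proof -
  have h: "continuous_on circle h"
    by (rule uniform_limit_theorem[OF always_eventually lim]) (simp_all add: F)
  define mass where "mass \<nu> = measure \<nu> (space \<nu>)" for \<nu> :: "complex measure"
  have "Bseq (\<lambda>k. mass (\<mu>s k))"
    unfolding mass_def by (rule convergent_imp_Bseq convergentI weak_conv_imp_measure_space wc)+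
  then obtain B where "\<And>k. norm (mass (\<mu>s k)) \<le> B"
    by (auto simp: Bseq_def)
  then have B: "\<And>k. mass (\<mu>s k) \<le> B"
    by (metis abs_le_D1 real_norm_def)
  have "0 \<le> B" using B[of 0] measure_nonneg[of "\<mu>s 0" "space (\<mu>s 0)"] unfolding mass_def by linarith
  have err: "(\<lambda>n. integral\<^sup>L (\<mu>s (m n)) (\<lambda>z. F n z - h z) - integral\<^sup>L \<mu> (\<lambda>z. F n z - h z)) \<longlonglongrightarrow> 0"
  proof (rule tendstoI)
    fix \<epsilon> :: real assume "\<epsilon> > 0"
    define \<eta> where "\<eta> = \<epsilon> / (B + mass \<mu> + 1)"
    have "B + mass \<mu> + 1 > 0"
      using \<open>0 \<le> B\<close> measure_nonneg[of \<mu> "space \<mu>"] unfolding mass_def by linarith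
    then have "\<eta> > 0" and "\<eta> * (B + mass \<mu> + 1) = \<epsilon>"
      using \<open>\<epsilon> > 0\<close> by (simp_all add: \<eta>_def)
    then have \<eta>_sum: "\<eta> * B + \<eta> * mass \<mu> + \<eta> = \<epsilon>"
      by (simp add: distrib_left)
    have "\<forall>\<^sub>F n in sequentially. \<forall>z\<in>circle. dist (F n z) (h z) < \<eta>"
      using lim \<open>\<eta> > 0\<close> by (rule uniform_limitD)
    then show "\<forall>\<^sub>F n in sequentially.
        dist (integral\<^sup>L (\<mu>s (m n)) (\<lambda>z. F n z - h z) - integral\<^sup>L \<mu> (\<lambda>z. F n z - h z)) 0 < \<epsilon>"
    proof (rule eventually_mono)
      fix n assume close: "\<forall>z\<in>circle. dist (F n z) (h z) < \<eta>"
      have Fh: "continuous_on circle (\<lambda>z. F n z - h z)" by (intro continuous_intros F h)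
      have bd: "\<And>z. z \<in> circle \<Longrightarrow> \<bar>F n z - h z\<bar> \<le> \<eta>"
        using close by (auto simp: dist_real_def less_imp_le)
      have "\<bar>integral\<^sup>L (\<mu>s (m n)) (\<lambda>z. F n z - h z)\<bar> \<le> \<eta> * mass (\<mu>s (m n))"
        using abs_integral_circle_measure_le(2)[OF \<mu>s Fh bd] by (simp add: mass_def)
      moreover have "\<bar>integral\<^sup>L \<mu> (\<lambda>z. F n z - h z)\<bar> \<le> \<eta> * mass \<mu>"
        using abs_integral_circle_measure_le(2)[OF \<mu> Fh bd] by (simp add: mass_def)
      moreover have "\<eta> * mass (\<mu>s (m n)) \<le> \<eta> * B"
        using B \<open>\<eta> > 0\<close> by (simp add: mult_left_mono)
      ultimately have "\<bar>integral\<^sup>L (\<mu>s (m n)) (\<lambda>z. F n z - h z) - integral\<^sup>L \<mu> (\<lambda>z. F n z - h z)\<bar> < \<epsilon>"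
        using \<eta>_sum \<open>\<eta> > 0\<close> by linarith
      then show "dist (integral\<^sup>L (\<mu>s (m n)) (\<lambda>z. F n z - h z) - integral\<^sup>L \<mu> (\<lambda>z. F n z - h z)) 0 < \<epsilon>"
        by (simp add: dist_real_def)
    qed
  qed
  have "(\<lambda>k. integral\<^sup>L (\<mu>s k) h) \<longlonglongrightarrow> integral\<^sup>L \<mu> h"
    using wc h unfolding weak_conv_def by blast
  then have "(\<lambda>n. integral\<^sup>L (\<mu>s (m n)) h) \<longlonglongrightarrow> integral\<^sup>L \<mu> h"
    using filterlim_compose[OF _ m] by blast
  then have h_lim: "(\<lambda>n. integral\<^sup>L (\<mu>s (m n)) h - integral\<^sup>L \<mu> h) \<longlonglongrightarrow> 0"
    by (rule LIM_zero)
  have split: "integral\<^sup>L \<nu> (\<lambda>z. F n z - h z) = integral\<^sup>L \<nu> (F n) - integral\<^sup>L \<nu> h"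
    if "\<nu> \<in> circle_measures" for \<nu> n
    by (rule Bochner_Integration.integral_diff) (use integrable_circle_measure that F h in auto)
  show ?thesis
    using tendsto_add[OF err h_lim] by (simp add: split \<mu>s \<mu>)
qed

lemma weak_conv_uniform_limit_equicontinuous:
  fixes g :: "'k \<Rightarrow> complex \<Rightarrow> real"
  assumes cont: "\<forall>\<xi>\<in>K. continuous_on circle (g \<xi>)"
    and eq: "equicontinuous_family K g" and ub: "uniformly_bounded_family K g"
    and \<mu>s: "\<And>k. \<mu>s k \<in> circle_measures" and \<mu>: "\<mu> \<in> circle_measures" and wc: "weak_conv \<mu>s \<mu>"
  shows "uniform_limit K (\<lambda>k \<xi>. integral\<^sup>L (\<mu>s k) (g \<xi>)) (\<lambda>\<xi>. integral\<^sup>L \<mu> (g \<xi>)) sequentially"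
proof (rule uniform_limitI, rule ccontr)
  fix \<epsilon> :: real assume "\<epsilon> > 0"
    and "\<not> (\<forall>\<^sub>F k in sequentially. \<forall>\<xi>\<in>K. dist (integral\<^sup>L (\<mu>s k) (g \<xi>)) (integral\<^sup>L \<mu> (g \<xi>)) < \<epsilon>)"
  then have "\<forall>N. \<exists>k\<ge>N. \<exists>\<xi>\<in>K. \<epsilon> \<le> dist (integral\<^sup>L (\<mu>s k) (g \<xi>)) (integral\<^sup>L \<mu> (g \<xi>))"
    by (auto simp: eventually_sequentially not_less)
  then obtain kk xi where kk: "\<And>N. N \<le> kk N" and xi: "\<And>N. xi N \<in> K"
    and far: "\<And>N. \<epsilon> \<le> dist (integral\<^sup>L (\<mu>s (kk N)) (g (xi N))) (integral\<^sup>L \<mu> (g (xi N)))"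
    by metis
  obtain C where C: "\<forall>\<xi>\<in>K. \<forall>z\<in>circle. \<bar>g \<xi> z\<bar> \<le> C"
    using ub unfolding uniformly_bounded_family_def by blast
  obtain h r where r: "strict_mono (r :: nat \<Rightarrow> nat)"
    and close: "\<And>e. 0 < e \<Longrightarrow> \<exists>N. \<forall>n z. n \<ge> N \<and> z \<in> circle \<longrightarrow> norm (g (xi (r n)) z - h z) < e"
  proof (rule Arzela_Ascoli[of circle "\<lambda>n. g (xi n)" C])
    show "norm (g (xi n) z) \<le> C" if "z \<in> circle" for n z
      using C xi that by auto
    show "\<exists>d>0. \<forall>n w. w \<in> circle \<and> norm (z - w) < d \<longrightarrow> norm (g (xi n) z - g (xi n) w) < e"
      if "z \<in> circle" "0 < e" for z e
    proof -
      obtain d where "d > 0"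
        and "\<forall>\<xi>\<in>K. \<forall>z1\<in>circle. \<forall>z2\<in>circle. dist z1 z2 < d \<longrightarrow> \<bar>g \<xi> z1 - g \<xi> z2\<bar> < e"
        using eq \<open>0 < e\<close> unfolding equicontinuous_family_def by blast
      then show ?thesis using xi that by (auto simp: dist_norm)
    qed
  qed auto
  have lim: "uniform_limit circle (\<lambda>n. g (xi (r n))) h sequentially"
  proof (rule uniform_limitI)
    fix e :: real assume "0 < e"
    then obtain N where "\<forall>n z. n \<ge> N \<and> z \<in> circle \<longrightarrow> norm (g (xi (r n)) z - h z) < e"
      using close by blast
    then show "\<forall>\<^sub>F n in sequentially. \<forall>z\<in>circle. dist (g (xi (r n)) z) (h z) < e"
      unfolding eventually_sequentially dist_norm by blast
  qed
  have sub: "filterlim (\<lambda>n. kk (r n)) at_top sequentially"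
  proof (rule filterlim_at_top_mono[OF filterlim_ident always_eventually], rule allI)
    show "n \<le> kk (r n)" for n using kk[of "r n"] seq_suble[OF r, of n] by linarith
  qed
  have "(\<lambda>n. integral\<^sup>L (\<mu>s (kk (r n))) (g (xi (r n))) - integral\<^sup>L \<mu> (g (xi (r n)))) \<longlonglongrightarrow> 0"
    by (rule weak_conv_integral_uniform_limit[OF \<mu>s \<mu> wc _ lim sub]) (use cont xi in blast)
  from tendstoD[OF this \<open>\<epsilon> > 0\<close>] obtain n
    where "\<bar>integral\<^sup>L (\<mu>s (kk (r n))) (g (xi (r n))) - integral\<^sup>L \<mu> (g (xi (r n)))\<bar> < \<epsilon>"
    by (auto simp: eventually_sequentially dist_real_def)
  then show False using far[of "r n"] by (simp add: dist_real_def)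
qed

lemma tendsto_SUP_ereal_uniform_limit:
  fixes f :: "'i \<Rightarrow> 'a \<Rightarrow> real"
  assumes lim: "uniform_limit K f l F" and fin: "(SUP \<xi>\<in>K. ereal (l \<xi>)) \<noteq> \<infinity>"
  shows "((\<lambda>i. SUP \<xi>\<in>K. ereal (f i \<xi>)) \<longlongrightarrow> (SUP \<xi>\<in>K. ereal (l \<xi>))) F"
proof (cases "K = {}")
  case False
  then obtain \<xi>0 where "\<xi>0 \<in> K" by blast
  then have "ereal (l \<xi>0) \<le> (SUP \<xi>\<in>K. ereal (l \<xi>))" by (rule SUP_upper)
  then obtain R where R: "(SUP \<xi>\<in>K. ereal (l \<xi>)) = ereal R"
    using fin by (cases "SUP \<xi>\<in>K. ereal (l \<xi>)") auto
  have close: "\<forall>\<^sub>F i in F. ereal (R - e) \<le> (SUP \<xi>\<in>K. ereal (f i \<xi>))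
      \<and> (SUP \<xi>\<in>K. ereal (f i \<xi>)) \<le> ereal (R + e)" if "e > 0" for e
    using uniform_limitD[OF lim that]
  proof (rule eventually_mono)
    fix i assume near: "\<forall>\<xi>\<in>K. dist (f i \<xi>) (l \<xi>) < e"
    have l_le: "ereal (l \<xi>) \<le> ereal R" if "\<xi> \<in> K" for \<xi>
      using SUP_upper[OF that, of "\<lambda>\<xi>. ereal (l \<xi>)"] R by simp
    have "(SUP \<xi>\<in>K. ereal (l \<xi>)) \<le> (SUP \<xi>\<in>K. ereal (f i \<xi>)) + ereal e"
    proof (rule SUP_least)
      fix \<xi> assume "\<xi> \<in> K"
      then have "ereal (l \<xi>) \<le> ereal (f i \<xi>) + ereal e"
        using near by (auto simp: dist_real_def)
      also have "\<dots> \<le> (SUP \<xi>\<in>K. ereal (f i \<xi>)) + ereal e"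
        using \<open>\<xi> \<in> K\<close> by (intro add_right_mono SUP_upper)
      finally show "ereal (l \<xi>) \<le> (SUP \<xi>\<in>K. ereal (f i \<xi>)) + ereal e" .
    qed
    then have "ereal (R - e) \<le> (SUP \<xi>\<in>K. ereal (f i \<xi>))"
      unfolding R by (cases "SUP \<xi>\<in>K. ereal (f i \<xi>)") auto
    moreover have "(SUP \<xi>\<in>K. ereal (f i \<xi>)) \<le> ereal (R + e)"
    proof (rule SUP_least)
      fix \<xi> assume "\<xi> \<in> K"
      then show "ereal (f i \<xi>) \<le> ereal (R + e)"
        using near l_le[of \<xi>] by (auto simp: dist_real_def)
    qed
    ultimately show "ereal (R - e) \<le> (SUP \<xi>\<in>K. ereal (f i \<xi>)) \<and> (SUP \<xi>\<in>K. ereal (f i \<xi>)) \<le> ereal (R + e)" ..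
  qed
  show ?thesis
    unfolding R
  proof (rule order_tendstoI)
    fix a assume "a < ereal R"
    then obtain z where "a < ereal z" "z < R" using ereal_dense2 by force
    moreover have "\<forall>\<^sub>F i in F. ereal z \<le> (SUP \<xi>\<in>K. ereal (f i \<xi>))"
      using close[of "R - z"] \<open>z < R\<close> by (auto elim: eventually_mono)
    ultimately show "\<forall>\<^sub>F i in F. a < (SUP \<xi>\<in>K. ereal (f i \<xi>))"
      by (auto elim: eventually_mono intro: less_le_trans)
  next
    fix a assume "ereal R < a"
    then obtain z where "ereal z < a" "R < z" using ereal_dense2 by force
    moreover have "\<forall>\<^sub>F i in F. (SUP \<xi>\<in>K. ereal (f i \<xi>)) \<le> ereal z"
      using close[of "z - R"] \<open>R < z\<close> by (auto elim: eventually_mono)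
    ultimately show "\<forall>\<^sub>F i in F. (SUP \<xi>\<in>K. ereal (f i \<xi>)) < a"
      by (auto elim: eventually_mono intro: le_less_trans)
  qed
qed simp

lemma ereal_abs_diff_le_delta:
  "\<xi> \<in> K \<Longrightarrow> ereal \<bar>integral\<^sup>L \<mu> (g \<xi>) - integral\<^sup>L \<nu> (g \<xi>)\<bar> \<le> delta K g \<mu> \<nu>"
  unfolding delta_def by (rule SUP_upper)

lemma delta_commute: "delta K g \<mu> \<nu> = delta K g \<nu> \<mu>"
  unfolding delta_def by (simp add: abs_minus_commute)

lemma delta_self: "K \<noteq> {} \<Longrightarrow> delta K g \<mu> \<mu> = 0"
  unfolding delta_def by (simp add: SUP_const)

lemma delta_nonneg:
  assumes "K \<noteq> {}" shows "0 \<le> delta K g \<mu> \<nu>"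
proof -
  obtain \<xi> where "\<xi> \<in> K" using assms by blast
  have "0 \<le> ereal \<bar>integral\<^sup>L \<mu> (g \<xi>) - integral\<^sup>L \<nu> (g \<xi>)\<bar>" by simp
  also have "\<dots> \<le> delta K g \<mu> \<nu>" using \<open>\<xi> \<in> K\<close> by (rule ereal_abs_diff_le_delta)
  finally show ?thesis .
qed

lemma delta_triangle: "delta K g \<mu> \<rho> \<le> delta K g \<mu> \<nu> + delta K g \<nu> \<rho>"
  unfolding delta_def[of K g \<mu> \<rho>]
proof (rule SUP_least)
  fix \<xi> assume "\<xi> \<in> K"
  have "ereal \<bar>integral\<^sup>L \<mu> (g \<xi>) - integral\<^sup>L \<rho> (g \<xi>)\<bar>
      \<le> ereal \<bar>integral\<^sup>L \<mu> (g \<xi>) - integral\<^sup>L \<nu> (g \<xi>)\<bar> + ereal \<bar>integral\<^sup>L \<nu> (g \<xi>) - integral\<^sup>L \<rho> (g \<xi>)\<bar>"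
    by simp
  also have "\<dots> \<le> delta K g \<mu> \<nu> + delta K g \<nu> \<rho>"
    using \<open>\<xi> \<in> K\<close> by (intro add_mono ereal_abs_diff_le_delta)
  finally show "ereal \<bar>integral\<^sup>L \<mu> (g \<xi>) - integral\<^sup>L \<rho> (g \<xi>)\<bar> \<le> delta K g \<mu> \<nu> + delta K g \<nu> \<rho>" .
qed

lemma delta_neq_infinity:
  assumes cont: "\<forall>\<xi>\<in>K. continuous_on circle (g \<xi>)" and ub: "uniformly_bounded_family K g"
    and \<mu>: "\<mu> \<in> circle_measures" and \<nu>: "\<nu> \<in> circle_measures"
  shows "delta K g \<mu> \<nu> \<noteq> \<infinity>"
proof -
  obtain C where C: "\<forall>\<xi>\<in>K. \<forall>z\<in>circle. \<bar>g \<xi> z\<bar> \<le> C"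
    using ub unfolding uniformly_bounded_family_def by blast
  have "delta K g \<mu> \<nu> \<le> ereal (C * measure \<mu> (space \<mu>) + C * measure \<nu> (space \<nu>))"
    unfolding delta_def
  proof (rule SUP_least)
    fix \<xi> assume "\<xi> \<in> K"
    then have bound: "\<bar>integral\<^sup>L \<rho> (g \<xi>)\<bar> \<le> C * measure \<rho> (space \<rho>)"
      if "\<rho> \<in> circle_measures" for \<rho>
      using abs_integral_circle_measure_le(2)[OF that] cont C by blast
    have "\<bar>integral\<^sup>L \<mu> (g \<xi>) - integral\<^sup>L \<nu> (g \<xi>)\<bar> \<le> C * measure \<mu> (space \<mu>) + C * measure \<nu> (space \<nu>)"
      using bound[OF \<mu>] bound[OF \<nu>] by linarith
    then show "ereal \<bar>integral\<^sup>L \<mu> (g \<xi>) - integral\<^sup>L \<nu> (g \<xi>)\<bar>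
        \<le> ereal (C * measure \<mu> (space \<mu>) + C * measure \<nu> (space \<nu>))"
      by simp
  qed
  then show ?thesis by auto
qed

lemma delta_return_null:
  assumes "\<forall>\<xi>\<in>K. continuous_on circle (g \<xi>)" and "z \<in> circle"
  shows "delta K g (return circle_borel z) (null_measure circle_borel) = (SUP \<xi>\<in>K. ereal \<bar>g \<xi> z\<bar>)"
  unfolding delta_def using assms by (intro SUP_cong) (auto simp: integral_return_circle)

lemma delta_return_return:
  assumes "\<forall>\<xi>\<in>K. continuous_on circle (g \<xi>)" and "z \<in> circle" "w \<in> circle"
  shows "delta K g (return circle_borel z) (return circle_borel w) = (SUP \<xi>\<in>K. ereal \<bar>g \<xi> z - g \<xi> w\<bar>)"
  unfolding delta_def using assms by (intro SUP_cong) (auto simp: integral_return_circle)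

lemma is_metric_on_delta:
  assumes cont: "\<forall>\<xi>\<in>K. continuous_on circle (g \<xi>)" and ub: "uniformly_bounded_family K g"
    and sep: "separating_family K g"
  shows "is_metric_on circle_measures (delta K g)"
proof -
  have "(1::complex) \<in> circle" by simp
  then have "\<exists>\<xi>\<in>K. integral\<^sup>L (null_measure circle_borel) (g \<xi>) \<noteq> integral\<^sup>L (return circle_borel 1) (g \<xi>)"
    using sep null_measure_in_circle_measures return_in_circle_measures null_measure_neq_return
    unfolding separating_family_def by blast
  then have "K \<noteq> {}" by blast
  have zero: "delta K g \<mu> \<nu> = 0 \<longleftrightarrow> \<mu> = \<nu>"
    if "\<mu> \<in> circle_measures" "\<nu> \<in> circle_measures" for \<mu> \<nu>
  proof
    assume "delta K g \<mu> \<nu> = 0"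
    then have "integral\<^sup>L \<mu> (g \<xi>) = integral\<^sup>L \<nu> (g \<xi>)" if "\<xi> \<in> K" for \<xi>
      using ereal_abs_diff_le_delta[OF that, of \<mu> g \<nu>] by simp
    then show "\<mu> = \<nu>" using sep that unfolding separating_family_def by blast
  qed (simp add: delta_self \<open>K \<noteq> {}\<close>)
  have finite: "delta K g \<mu> \<nu> \<noteq> \<infinity> \<and> delta K g \<mu> \<nu> \<noteq> -\<infinity> \<and> 0 \<le> delta K g \<mu> \<nu>"
    if "\<mu> \<in> circle_measures" "\<nu> \<in> circle_measures" for \<mu> \<nu>
    using delta_neq_infinity[OF cont ub that] delta_nonneg[OF \<open>K \<noteq> {}\<close>, of g \<mu> \<nu>] by auto
  show ?thesis
    unfolding is_metric_on_def
    by (intro conjI ballI) (simp_all add: finite zero delta_commute[of K g] delta_triangle)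
qed

lemma weakly_continuous_delta:
  assumes cont: "\<forall>\<xi>\<in>K. continuous_on circle (g \<xi>)"
    and eq: "equicontinuous_family K g" and ub: "uniformly_bounded_family K g"
  shows "weakly_continuous (delta K g)"
  unfolding weakly_continuous_def
proof (intro allI impI)
  fix \<mu>s \<nu>s \<mu> \<nu>
  assume \<mu>s: "\<forall>k. \<mu>s k \<in> circle_measures" and \<nu>s: "\<forall>k. \<nu>s k \<in> circle_measures"
    and \<mu>: "\<mu> \<in> circle_measures" and \<nu>: "\<nu> \<in> circle_measures"
    and wc\<mu>: "weak_conv \<mu>s \<mu>" and wc\<nu>: "weak_conv \<nu>s \<nu>"
  have "uniform_limit K (\<lambda>k \<xi>. integral\<^sup>L (\<mu>s k) (g \<xi>)) (\<lambda>\<xi>. integral\<^sup>L \<mu> (g \<xi>)) sequentially"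
    using \<mu>s by (intro weak_conv_uniform_limit_equicontinuous[OF cont eq ub _ \<mu> wc\<mu>]) blast
  moreover have "uniform_limit K (\<lambda>k \<xi>. integral\<^sup>L (\<nu>s k) (g \<xi>)) (\<lambda>\<xi>. integral\<^sup>L \<nu> (g \<xi>)) sequentially"
    using \<nu>s by (intro weak_conv_uniform_limit_equicontinuous[OF cont eq ub _ \<nu> wc\<nu>]) blast
  ultimately have "uniform_limit K (\<lambda>k \<xi>. norm (integral\<^sup>L (\<mu>s k) (g \<xi>) - integral\<^sup>L (\<nu>s k) (g \<xi>)))
      (\<lambda>\<xi>. norm (integral\<^sup>L \<mu> (g \<xi>) - integral\<^sup>L \<nu> (g \<xi>))) sequentially"
    by (intro uniform_limit_norm uniform_limit_minus)
  then have "uniform_limit K (\<lambda>k \<xi>. \<bar>integral\<^sup>L (\<mu>s k) (g \<xi>) - integral\<^sup>L (\<nu>s k) (g \<xi>)\<bar>)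
      (\<lambda>\<xi>. \<bar>integral\<^sup>L \<mu> (g \<xi>) - integral\<^sup>L \<nu> (g \<xi>)\<bar>) sequentially"
    by (simp only: real_norm_def)
  moreover have "delta K g \<mu> \<nu> \<noteq> \<infinity>"
    using delta_neq_infinity[OF cont ub \<mu> \<nu>] .
  ultimately show "(\<lambda>k. delta K g (\<mu>s k) (\<nu>s k)) \<longlonglongrightarrow> delta K g \<mu> \<nu>"
    unfolding delta_def by (rule tendsto_SUP_ereal_uniform_limit)
qed

lemma separating_if_is_metric_on_delta:
  assumes "is_metric_on circle_measures (delta K g)"
  shows "separating_family K g"
  unfolding separating_family_def
proof (intro ballI impI, rule ccontr)
  fix \<mu>0 \<mu>1 assume \<mu>: "\<mu>0 \<in> circle_measures" "\<mu>1 \<in> circle_measures" "\<mu>0 \<noteq> \<mu>1"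
    and "\<not> (\<exists>\<xi>\<in>K. integral\<^sup>L \<mu>0 (g \<xi>) \<noteq> integral\<^sup>L \<mu>1 (g \<xi>))"
  then have "delta K g \<mu>0 \<mu>1 = delta K g \<mu>0 \<mu>0"
    unfolding delta_def by (intro SUP_cong) auto
  moreover have "delta K g \<mu>0 \<mu>1 = 0 \<longleftrightarrow> \<mu>0 = \<mu>1" "delta K g \<mu>0 \<mu>0 = 0"
    using assms \<mu>(1,2) unfolding is_metric_on_def by auto
  ultimately show False using \<mu>(3) by simp
qed

lemma ereal_real_of_metric:
  "is_metric_on A d \<Longrightarrow> x \<in> A \<Longrightarrow> y \<in> A \<Longrightarrow> ereal (real_of_ereal (d x y)) = d x y"
  unfolding is_metric_on_def by (cases "d x y") auto

lemma continuous_on_metric_return: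
  assumes met: "is_metric_on circle_measures d" and wc: "weakly_continuous d"
    and \<nu>: "\<nu> \<in> circle_measures"
  shows "continuous_on circle (\<lambda>z. real_of_ereal (d (return circle_borel z) \<nu>))"
proof (rule continuous_on_sequentiallyI)
  fix u a assume u: "\<forall>n. u n \<in> circle" "a \<in> circle" "u \<longlonglongrightarrow> a"
  have "(\<lambda>n. d (return circle_borel (u n)) \<nu>) \<longlonglongrightarrow> d (return circle_borel a) \<nu>"
    using wc u \<nu> return_in_circle_measures weak_conv_return[of u a] weak_conv_const
    unfolding weakly_continuous_def by simp
  then show "(\<lambda>n. real_of_ereal (d (return circle_borel (u n)) \<nu>))
      \<longlonglongrightarrow> real_of_ereal (d (return circle_borel a) \<nu>)"
    by (intro lim_real_of_ereal)
      (simp add: ereal_real_of_metric[OF met return_in_circle_measures[OF u(2)] \<nu>])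
qed

lemma continuous_on_metric_return_pair:
  assumes met: "is_metric_on circle_measures d" and wc: "weakly_continuous d"
  shows "continuous_on (circle \<times> circle)
    (\<lambda>p. real_of_ereal (d (return circle_borel (fst p)) (return circle_borel (snd p))))"
proof (rule continuous_on_sequentiallyI)
  fix u a assume u: "\<forall>n. u n \<in> circle \<times> circle" "a \<in> circle \<times> circle" "u \<longlonglongrightarrow> a"
  then have "weak_conv (\<lambda>n. return circle_borel (fst (u n))) (return circle_borel (fst a))"
    and "weak_conv (\<lambda>n. return circle_borel (snd (u n))) (return circle_borel (snd a))"
    by (auto intro!: weak_conv_return tendsto_fst tendsto_snd simp: mem_Times_iff)
  then have "(\<lambda>n. d (return circle_borel (fst (u n))) (return circle_borel (snd (u n))))
      \<longlonglongrightarrow> d (return circle_borel (fst a)) (return circle_borel (snd a))"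
    using wc u return_in_circle_measures unfolding weakly_continuous_def by (simp add: mem_Times_iff)
  then show "(\<lambda>n. real_of_ereal (d (return circle_borel (fst (u n))) (return circle_borel (snd (u n)))))
      \<longlonglongrightarrow> real_of_ereal (d (return circle_borel (fst a)) (return circle_borel (snd a)))"
    using u(2) by (intro lim_real_of_ereal)
      (simp add: ereal_real_of_metric[OF met] return_in_circle_measures mem_Times_iff)
qed

lemma uniformly_bounded_if_weakly_continuous_metric:
  assumes cont: "\<forall>\<xi>\<in>K. continuous_on circle (g \<xi>)"
    and met: "is_metric_on circle_measures (delta K g)" and wc: "weakly_continuous (delta K g)"
  shows "uniformly_bounded_family K g"
proof -
  obtain B where B: "\<And>z. z \<in> circle \<Longrightarrow>
      norm (real_of_ereal (delta K g (return circle_borel z) (null_measure circle_borel))) \<le> B"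
    using continuous_on_compact_bound[OF compact_sphere continuous_on_metric_return[OF met wc null_measure_in_circle_measures]]
    by blast
  have "\<bar>g \<xi> z\<bar> \<le> B" if "\<xi> \<in> K" "z \<in> circle" for \<xi> z
  proof -
    have "ereal \<bar>g \<xi> z\<bar> \<le> delta K g (return circle_borel z) (null_measure circle_borel)"
      unfolding delta_return_null[OF cont \<open>z \<in> circle\<close>] using \<open>\<xi> \<in> K\<close> by (rule SUP_upper)
    then have "\<bar>g \<xi> z\<bar> \<le> real_of_ereal (delta K g (return circle_borel z) (null_measure circle_borel))"
      by (subst (asm) ereal_real_of_metric[OF met return_in_circle_measures[OF \<open>z \<in> circle\<close>]
          null_measure_in_circle_measures, symmetric]) simp
    then show ?thesis using B[OF \<open>z \<in> circle\<close>] unfolding real_norm_def by linarith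
  qed
  then show ?thesis unfolding uniformly_bounded_family_def by blast
qed

lemma equicontinuous_if_weakly_continuous_metric:
  assumes cont: "\<forall>\<xi>\<in>K. continuous_on circle (g \<xi>)"
    and met: "is_metric_on circle_measures (delta K g)" and wc: "weakly_continuous (delta K g)"
  shows "equicontinuous_family K g"
  unfolding equicontinuous_family_def
proof (intro allI impI)
  fix \<epsilon> :: real assume "\<epsilon> > 0"
  define E where "E p = real_of_ereal (delta K g (return circle_borel (fst p)) (return circle_borel (snd p)))"
    for p
  have "uniformly_continuous_on (circle \<times> circle) E"
    unfolding E_def using continuous_on_metric_return_pair[OF met wc]
    by (rule compact_uniformly_continuous) (simp add: compact_Times)
  then obtain \<gamma> where "\<gamma> > 0"
    and \<gamma>: "\<forall>p\<in>circle \<times> circle. \<forall>q\<in>circle \<times> circle. dist q p < \<gamma> \<longrightarrow> dist (E q) (E p) < \<epsilon>"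
    using \<open>\<epsilon> > 0\<close> unfolding uniformly_continuous_on_def by blast
  have "\<bar>g \<xi> z1 - g \<xi> z2\<bar> < \<epsilon>"
    if "\<xi> \<in> K" "z1 \<in> circle" "z2 \<in> circle" "dist z1 z2 < \<gamma>" for \<xi> z1 z2
  proof -
    have "ereal \<bar>g \<xi> z1 - g \<xi> z2\<bar> \<le> delta K g (return circle_borel z1) (return circle_borel z2)"
      unfolding delta_return_return[OF cont that(2,3)] using \<open>\<xi> \<in> K\<close> by (rule SUP_upper)
    then have "\<bar>g \<xi> z1 - g \<xi> z2\<bar> \<le> E (z1, z2)"
      unfolding E_def fst_conv snd_conv
      by (subst (asm) ereal_real_of_metric[OF met return_in_circle_measures return_in_circle_measures,
          OF that(2,3), symmetric]) simp
    moreover have "delta K g (return circle_borel z2) (return circle_borel z2) = 0"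
      using met return_in_circle_measures[OF that(3)] unfolding is_metric_on_def by blast
    then have "E (z2, z2) = 0" by (simp add: E_def)
    moreover have "dist (E (z1, z2)) (E (z2, z2)) < \<epsilon>"
      using \<gamma> that by (simp add: dist_Pair_Pair)
    ultimately show ?thesis by (simp add: dist_real_def)
  qed
  then show "\<exists>\<gamma>>0. \<forall>\<xi>\<in>K. \<forall>z1\<in>circle. \<forall>z2\<in>circle. dist z1 z2 < \<gamma> \<longrightarrow> \<bar>g \<xi> z1 - g \<xi> z2\<bar> < \<epsilon>"
    using \<open>\<gamma> > 0\<close> by blast
qed

theorem proposition4:
  fixes K :: "'k set" and g :: "'k \<Rightarrow> complex \<Rightarrow> real"
  assumes cont: "\<forall>\<xi>\<in>K. continuous_on circle (g \<xi>)"
  shows "(is_metric_on circle_measures (delta K g) \<and> weakly_continuous (delta K g)) \<longleftrightarrow>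
         ((\<forall>\<mu>0\<in>circle_measures. \<forall>\<mu>1\<in>circle_measures. \<mu>0 \<noteq> \<mu>1 \<longrightarrow>
              (\<exists>\<xi>\<in>K. integral\<^sup>L \<mu>0 (g \<xi>) \<noteq> integral\<^sup>L \<mu>1 (g \<xi>))) \<and>
          equicontinuous_family K g \<and> uniformly_bounded_family K g)"
  unfolding separating_family_def[symmetric]
  by (intro iffI conjI; elim conjE)
    (rule separating_if_is_metric_on_delta equicontinuous_if_weakly_continuous_metric[OF cont]
        uniformly_bounded_if_weakly_continuous_metric[OF cont] is_metric_on_delta[OF cont]
        weakly_continuous_delta[OF cont]; assumption)+

end
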